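(* Let $\mathcal S$ be an $\epsilon$-sample of $\mathcal C$ with $0<\epsilon\le1$. Let $a,b\in\mathcal S$ with $a\to b$ and let $p\in(a,b)$. Then $d_p=\min\{d(p,a),d(p,b)\}$, and $d_p<d(p,s)$ for all $s\in\mathcal S\setminus\{a,b\}$.
   Context: $\mathcal C\subset\mathbb R^d$ ($d\ge2$) is a finite union of pairwise disjoint closed curves (images of injective continuous maps $S^1\to\mathbb R^d$); $\mathcal S\subset\mathcal C$ is finite. The medial axis $\mathcal M$ is the set of points with no unique closest point in $\mathcal C$, $\mathrm{lfs}(p)=d(p,\mathcal M)$, and $\mathcal S$ is an $\epsilon$-sample if $d(p,\mathcal S)<\epsilon\,\mathrm{lfs}(p)$ for all $p\in\mathcal C$. For $p\in\mathcal C$, $d_p=d(p,\mathcal S)$. For sample points, $a\to b$ means: for a chosen orientation of the component of $\mathcal C$ containing $a,b$, moving from $a$ along the orientation, the next sample point met is $b$. With this orientation, $(a,b)$ denotes the open arc from $a$ to $b$ along the orientation. *)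

theory Defs
  imports "HOL-Analysis.Analysis"
begin

definition medial_axis :: "'a::euclidean_space set \<Rightarrow> 'a set" where
  "medial_axis C = {x. \<not> (\<exists>!c. c \<in> C \<and> (\<forall>c'\<in>C. dist x c \<le> dist x c'))}"

definition lfs :: "'a::euclidean_space set \<Rightarrow> 'a \<Rightarrow> real" where
  "lfs C p = infdist p (medial_axis C)"

definition eps_sample :: "'a::euclidean_space set \<Rightarrow> 'a set \<Rightarrow> real \<Rightarrow> bool" where
  "eps_sample C S \<epsilon> \<longleftrightarrow> finite S \<and> S \<subseteq> C \<and> (\<forall>p\<in>C. infdist p S < \<epsilon> * lfs C p)"

text \<open>A closed curve is parametrised by an injective continuous map on the unit circle
  (of the complex plane); its orientation is the counterclockwise one of the parameter.
  The open arc from a to b along this orientation (for a = b: the whole curve minus a).\<close>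
definition open_arc :: "(complex \<Rightarrow> 'a) \<Rightarrow> 'a \<Rightarrow> 'a \<Rightarrow> 'a set" where
  "open_arc \<gamma> a b = {p. \<exists>\<alpha> \<delta> t. \<gamma> (cis \<alpha>) = a \<and> 0 < \<delta> \<and> \<delta> \<le> 2 * pi \<and>
      \<gamma> (cis (\<alpha> + \<delta>)) = b \<and> 0 < t \<and> t < \<delta> \<and> p = \<gamma> (cis (\<alpha> + t))}"

definition next_sample :: "(complex \<Rightarrow> 'a) \<Rightarrow> 'a set \<Rightarrow> 'a \<Rightarrow> 'a \<Rightarrow> bool" where
  "next_sample \<gamma> S a b \<longleftrightarrow> a \<in> S \<and> b \<in> S \<and> a \<in> \<gamma> ` sphere 0 1 \<and> b \<in> \<gamma> ` sphere 0 1 \<and>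
      open_arc \<gamma> a b \<inter> S = {}"

end

theory Submission
  imports Defs
begin

text \<open>Suppose some sample s other than a, b were at most as close to p as a and b. Since
  \<open>d\<^sub>p < \<epsilon> lfs(p) \<le> lfs(p)\<close>, we may take s within lfs(p) of p; then the segment [p, s] misses
  the medial axis, so its nearest-point projection onto C is continuous and yields a connected
  subset of C from p to s. Every projected point other than s is strictly closer to p than s,
  so this subset avoids a and b. But a and b cut C into two closed pieces, the arc from a to b
  through p and the rest, and s lies in the rest because the open arc contains no sample.\<close>

lemma inj_on_cis: "inj_on cis {0..<2*pi}"
proof (rule inj_on_inverseI)
  fix u assume "u \<in> {0..<2*pi}"
  then show "Arg2pi (cis u) = u" by (intro Arg2pi_unique[of 1]) (simp_all add: cis_conv_exp)
qed

lemma cis_add_left_cancel: "cis (\<alpha> + u) = cis (\<alpha> + v) \<longleftrightarrow> cis u = cis v"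
  by (simp flip: cis_mult)

lemma sphere_eq_cis_image: "sphere (0::complex) 1 = (\<lambda>u. cis (\<alpha> + u)) ` {0..<2*pi}"
proof
  show "sphere 0 1 \<subseteq> (\<lambda>u. cis (\<alpha> + u)) ` {0..<2*pi}"
  proof
    fix z :: complex assume "z \<in> sphere 0 1"
    define w where "w = z * cis (-\<alpha>)"
    have "norm w = 1" using \<open>z \<in> sphere 0 1\<close> by (simp add: w_def norm_mult)
    then have "cis (Arg2pi w) = w"
      using Arg2pi[of w] by (simp add: is_Arg_def cis_conv_exp)
    then have "z = cis (\<alpha> + Arg2pi w)"
      by (simp add: w_def flip: cis_mult) (simp add: mult.left_commute cis_mult)
    then show "z \<in> (\<lambda>u. cis (\<alpha> + u)) ` {0..<2*pi}"
      using Arg2pi[of w] by auto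
  qed
qed auto

definition curve_arc :: "(complex \<Rightarrow> 'a) \<Rightarrow> real \<Rightarrow> real \<Rightarrow> real \<Rightarrow> 'a set" where
  "curve_arc \<gamma> \<alpha> x y = (\<lambda>u. \<gamma> (cis (\<alpha> + u))) ` {x..y}"

lemma compact_curve_arc:
  fixes \<gamma> :: "complex \<Rightarrow> 'a::metric_space"
  assumes "continuous_on (sphere 0 1) \<gamma>"
  shows "compact (curve_arc \<gamma> \<alpha> x y)"
  unfolding curve_arc_def
  by (intro compact_continuous_image continuous_on_compose2[OF assms] continuous_intros) auto

lemma curve_arc_Un:
  assumes "0 \<le> \<delta>" "\<delta> \<le> 2*pi"
  shows "\<gamma> ` sphere 0 1 = curve_arc \<gamma> \<alpha> 0 \<delta> \<union> curve_arc \<gamma> \<alpha> \<delta> (2*pi)"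
proof -
  have "{0..<2*pi} \<subseteq> {0..\<delta>} \<union> {\<delta>..2*pi}" using assms by auto
  then have "\<gamma> ` sphere 0 1 \<subseteq> curve_arc \<gamma> \<alpha> 0 \<delta> \<union> curve_arc \<gamma> \<alpha> \<delta> (2*pi)"
    by (subst sphere_eq_cis_image[of \<alpha>]) (auto simp: curve_arc_def)
  then show ?thesis by (auto simp: curve_arc_def)
qed

lemma curve_arc_Int:
  assumes "inj_on \<gamma> (sphere 0 1)" "0 < \<delta>" "\<delta> \<le> 2*pi"
  shows "curve_arc \<gamma> \<alpha> 0 \<delta> \<inter> curve_arc \<gamma> \<alpha> \<delta> (2*pi) \<subseteq> {\<gamma> (cis \<alpha>), \<gamma> (cis (\<alpha> + \<delta>))}"
proof
  fix x assume "x \<in> curve_arc \<gamma> \<alpha> 0 \<delta> \<inter> curve_arc \<gamma> \<alpha> \<delta> (2*pi)"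
  then obtain u v where u: "0 \<le> u" "u \<le> \<delta>" "x = \<gamma> (cis (\<alpha> + u))"
    and v: "\<delta> \<le> v" "v \<le> 2*pi" "x = \<gamma> (cis (\<alpha> + v))"
    by (auto simp: curve_arc_def)
  have "cis (\<alpha> + u) = cis (\<alpha> + v)"
    using u(3) v(3) by (auto intro: inj_onD[OF assms(1)])
  then have "cis u = cis v" by (simp add: cis_add_left_cancel)
  consider "u = 2*pi" | "v = 2*pi" "u < 2*pi" | "u < 2*pi" "v < 2*pi"
    using u v assms(3) by linarith
  then show "x \<in> {\<gamma> (cis \<alpha>), \<gamma> (cis (\<alpha> + \<delta>))}"
  proof cases
    case 1
    then show ?thesis using u assms(3) by auto
  next
    case 2
    then have "u = 0"
      using \<open>cis u = cis v\<close> u(1) inj_onD[OF inj_on_cis, of u 0] by simp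
    then show ?thesis using u by simp
  next
    case 3
    then have "u = v" using \<open>cis u = cis v\<close> u(1) v(1) assms(2)
      by (intro inj_onD[OF inj_on_cis]) auto
    then show ?thesis using u v by simp
  qed
qed

lemma curve_arc_minus_ends_subset_open_arc:
  assumes "0 < \<delta>" "\<delta> \<le> 2*pi"
  shows "curve_arc \<gamma> \<alpha> 0 \<delta> - {\<gamma> (cis \<alpha>), \<gamma> (cis (\<alpha> + \<delta>))}
           \<subseteq> open_arc \<gamma> (\<gamma> (cis \<alpha>)) (\<gamma> (cis (\<alpha> + \<delta>)))"
proof
  fix x assume "x \<in> curve_arc \<gamma> \<alpha> 0 \<delta> - {\<gamma> (cis \<alpha>), \<gamma> (cis (\<alpha> + \<delta>))}"
  then obtain u where "0 < u" "u < \<delta>" "x = \<gamma> (cis (\<alpha> + u))"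
    by (auto simp: curve_arc_def less_eq_real_def)
  then show "x \<in> open_arc \<gamma> (\<gamma> (cis \<alpha>)) (\<gamma> (cis (\<alpha> + \<delta>)))"
    using assms unfolding open_arc_def by blast
qed

lemma curve_family_cut_at_arc_ends:
  fixes \<Gamma> :: "(complex \<Rightarrow> 'a::metric_space) set"
  assumes "finite \<Gamma>" "\<And>g. g \<in> \<Gamma> \<Longrightarrow> continuous_on (sphere 0 1) g"
    and "\<And>g h. g \<in> \<Gamma> \<Longrightarrow> h \<in> \<Gamma> \<Longrightarrow> g \<noteq> h \<Longrightarrow> g ` sphere 0 1 \<inter> h ` sphere 0 1 = {}"
    and "\<gamma> \<in> \<Gamma>" "inj_on \<gamma> (sphere 0 1)" "0 < \<delta>" "\<delta> \<le> 2*pi"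
  obtains E where "closed E" "(\<Union>g\<in>\<Gamma>. g ` sphere 0 1) \<subseteq> curve_arc \<gamma> \<alpha> 0 \<delta> \<union> E"
    "curve_arc \<gamma> \<alpha> 0 \<delta> \<inter> E \<subseteq> {\<gamma> (cis \<alpha>), \<gamma> (cis (\<alpha> + \<delta>))}"
proof
  let ?E = "curve_arc \<gamma> \<alpha> \<delta> (2*pi) \<union> (\<Union>g\<in>\<Gamma>-{\<gamma>}. g ` sphere 0 1)"
  have "compact (g ` sphere 0 1)" if "g \<in> \<Gamma>" for g
    using assms(2)[OF that] by (intro compact_continuous_image) auto
  then show "closed ?E"
    using assms(1,2,4) by (intro closed_Un closed_UN compact_imp_closed compact_curve_arc) auto
  have split: "\<gamma> ` sphere 0 1 = curve_arc \<gamma> \<alpha> 0 \<delta> \<union> curve_arc \<gamma> \<alpha> \<delta> (2*pi)"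
    using assms(6,7) by (intro curve_arc_Un) auto
  then show "(\<Union>g\<in>\<Gamma>. g ` sphere 0 1) \<subseteq> curve_arc \<gamma> \<alpha> 0 \<delta> \<union> ?E"
    by blast
  have "curve_arc \<gamma> \<alpha> 0 \<delta> \<inter> g ` sphere 0 1 = {}" if "g \<in> \<Gamma> - {\<gamma>}" for g
    using split assms(3)[OF assms(4), of g] that by blast
  then show "curve_arc \<gamma> \<alpha> 0 \<delta> \<inter> ?E \<subseteq> {\<gamma> (cis \<alpha>), \<gamma> (cis (\<alpha> + \<delta>))}"
    using curve_arc_Int[OF assms(5-7), of \<alpha>] by blast
qed

definition nearest_point :: "'a::euclidean_space set \<Rightarrow> 'a \<Rightarrow> 'a" where
  "nearest_point C x = (THE c. c \<in> C \<and> (\<forall>c'\<in>C. dist x c \<le> dist x c'))"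

lemma nearest_point:
  assumes "x \<notin> medial_axis C"
  shows "nearest_point C x \<in> C" "c \<in> C \<Longrightarrow> dist x (nearest_point C x) \<le> dist x c"
  using theI'[of "\<lambda>c. c \<in> C \<and> (\<forall>c'\<in>C. dist x c \<le> dist x c')"] assms
  by (auto simp: nearest_point_def medial_axis_def)

lemma nearest_point_eqI:
  assumes "x \<notin> medial_axis C" "c \<in> C" "\<And>c'. c' \<in> C \<Longrightarrow> dist x c \<le> dist x c'"
  shows "nearest_point C x = c"
  using assms nearest_point[OF assms(1)] by (auto simp: medial_axis_def)

lemma not_medial_axis_if_dist_less_lfs: "dist p x < lfs C p \<Longrightarrow> x \<notin> medial_axis C"
  using infdist_le[of x "medial_axis C" p] by (auto simp: lfs_def)

lemma continuous_on_nearest_point: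
  assumes "compact C" "closed X" "X \<inter> medial_axis C = {}"
  shows "continuous_on X (nearest_point C)"
proof (cases "C = {}")
  case True
  then have "X = {}" using assms(3) by (auto simp: medial_axis_def)
  then show ?thesis by simp
next
  case False
  have graph: "(\<lambda>x. (x, nearest_point C x)) ` X
      = (X \<times> C) \<inter> {z. dist (fst z) (snd z) \<le> infdist (fst z) C}"
  proof (intro set_eqI iffI)
    fix z assume "z \<in> (\<lambda>x. (x, nearest_point C x)) ` X"
    then obtain x where "x \<in> X" "z = (x, nearest_point C x)" by auto
    moreover from \<open>x \<in> X\<close> have "x \<notin> medial_axis C" using assms(3) by blast
    ultimately show "z \<in> (X \<times> C) \<inter> {z. dist (fst z) (snd z) \<le> infdist (fst z) C}"
      using False nearest_point by (auto simp: infdist_notempty intro!: cINF_greatest)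
  next
    fix z assume z: "z \<in> (X \<times> C) \<inter> {z. dist (fst z) (snd z) \<le> infdist (fst z) C}"
    then obtain x c where "z = (x, c)" "x \<in> X" "c \<in> C" "dist x c \<le> infdist x C" by auto
    moreover from \<open>x \<in> X\<close> have "x \<notin> medial_axis C" using assms(3) by blast
    ultimately show "z \<in> (\<lambda>x. (x, nearest_point C x)) ` X"
      by (auto intro!: image_eqI nearest_point_eqI[symmetric] order_trans[OF _ infdist_le])
  qed
  have "closed ((\<lambda>x. (x, nearest_point C x)) ` X)"
    unfolding graph using assms(2) compact_imp_closed[OF assms(1)]
    by (intro closed_Int closed_Times closed_Collect_le continuous_intros)
  then show ?thesis
    using assms nearest_point(1) by (intro continuous_from_closed_graph[OF assms(1)]) auto
qed

lemma nearest_point_image_segment: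
  assumes "compact C" "p \<in> C" "s \<in> C" "dist p s < lfs C p"
  obtains P where "connected P" "P \<subseteq> C" "p \<in> P" "s \<in> P"
    "\<And>e. e \<in> P \<Longrightarrow> e \<noteq> s \<Longrightarrow> dist p e < dist p s"
proof
  let ?\<pi> = "nearest_point C" and ?seg = "closed_segment p s"
  have off_axis: "x \<notin> medial_axis C" if "x \<in> ?seg" for x
  proof -
    have "dist p x \<le> dist p s" using dist_in_closed_segment[OF that] by (simp add: dist_commute)
    then show ?thesis using assms(4) by (intro not_medial_axis_if_dist_less_lfs[of p]) linarith
  qed
  then have "continuous_on ?seg ?\<pi>"
    using assms(1) by (intro continuous_on_nearest_point) auto
  then show "connected (?\<pi> ` ?seg)"
    by (intro connected_continuous_image) auto
  show "?\<pi> ` ?seg \<subseteq> C" using nearest_point(1) off_axis by blast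
  have "?\<pi> p = p" "?\<pi> s = s"
    using off_axis assms(2,3) by (auto intro: nearest_point_eqI)
  then show "p \<in> ?\<pi> ` ?seg" "s \<in> ?\<pi> ` ?seg"
    by (metis ends_in_segment image_eqI)+
  fix e assume "e \<in> ?\<pi> ` ?seg" "e \<noteq> s"
  then obtain x where x: "x \<in> ?seg" "e = ?\<pi> x" by auto
  \<comment> \<open>otherwise s would be a second nearest point of x\<close>
  have "dist x e < dist x s"
  proof (rule ccontr)
    assume "\<not> dist x e < dist x s"
    then have "?\<pi> x = s"
      using nearest_point[OF off_axis[OF x(1)]] x(2) assms(3)
      by (intro nearest_point_eqI[OF off_axis[OF x(1)] assms(3)]) force
    then show False using x(2) \<open>e \<noteq> s\<close> by simp
  qed
  moreover have "dist p x + dist x s = dist p s"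
    using x(1) by (metis between_mem_segment between dist_commute)
  ultimately show "dist p e < dist p s"
    using dist_triangle[of p e x] by linarith
qed

lemma cut_point_nearer_than_separated_point:
  assumes "compact C" "p \<in> C" "s \<in> C" "dist p s < lfs C p"
    and "closed E1" "closed E2" "C \<subseteq> E1 \<union> E2" "E1 \<inter> E2 \<subseteq> {a, b}"
    and "p \<in> E1" "s \<in> E2" "s \<notin> {a, b}"
  shows "min (dist p a) (dist p b) < dist p s"
proof (rule ccontr)
  assume not_less: "\<not> ?thesis"
  obtain P where P: "connected P" "P \<subseteq> C" "p \<in> P" "s \<in> P"
    "\<And>e. e \<in> P \<Longrightarrow> e \<noteq> s \<Longrightarrow> dist p e < dist p s"
    using nearest_point_image_segment[OF assms(1-4)] by blast
  have "a \<notin> P" "b \<notin> P" using P(5) assms(11) not_less by force+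
  then have "E1 \<inter> E2 \<inter> P = {}" using assms(8) by blast
  then show False
    using P(1-4) assms(5-7,9,10) unfolding connected_closed by blast
qed

lemma infdist_eq_min_if_others_far:
  fixes S :: "'a::heine_borel set"
  assumes "finite S" "a \<in> S" "b \<in> S" "infdist p S < L"
    and far: "\<And>s. s \<in> S - {a, b} \<Longrightarrow> dist p s < L \<Longrightarrow> min (dist p a) (dist p b) < dist p s"
  shows "infdist p S = min (dist p a) (dist p b) \<and> (\<forall>s \<in> S - {a, b}. infdist p S < dist p s)"
proof -
  obtain s0 where s0: "s0 \<in> S" "infdist p S = dist p s0"
    using infdist_attains_inf[OF finite_imp_closed[OF assms(1)]] assms(2) by blast
  have le: "infdist p S \<le> min (dist p a) (dist p b)"
    using infdist_le[OF assms(2)] infdist_le[OF assms(3)] by simp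
  have "s0 \<in> {a, b}"
  proof (rule ccontr)
    assume "s0 \<notin> {a, b}"
    then have "min (dist p a) (dist p b) < dist p s0" using far s0 assms(4) by simp
    then show False using le s0(2) by simp
  qed
  then have eq: "infdist p S = min (dist p a) (dist p b)" using le s0(2) by auto
  have "infdist p S < dist p s" if "s \<in> S - {a, b}" for s
    using far[OF that] eq assms(4) by fastforce
  with eq show ?thesis by blast
qed

theorem lemma3p4:
  fixes \<Gamma> :: "(complex \<Rightarrow> 'a::euclidean_space) set"
    and C S :: "'a set" and \<epsilon> :: real and \<gamma> :: "complex \<Rightarrow> 'a" and a b p :: 'a
  assumes "DIM('a) \<ge> 2"
    and "finite \<Gamma>"
    and "\<And>g. g \<in> \<Gamma> \<Longrightarrow> continuous_on (sphere 0 1) g \<and> inj_on g (sphere 0 1)"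
    and "\<And>g h. g \<in> \<Gamma> \<Longrightarrow> h \<in> \<Gamma> \<Longrightarrow> g \<noteq> h \<Longrightarrow> g ` sphere 0 1 \<inter> h ` sphere 0 1 = {}"
    and "C = (\<Union>g\<in>\<Gamma>. g ` sphere 0 1)"
    and "eps_sample C S \<epsilon>"
    and "0 < \<epsilon>" and "\<epsilon> \<le> 1"
    and "\<gamma> \<in> \<Gamma>"
    and "next_sample \<gamma> S a b"
    and "p \<in> open_arc \<gamma> a b"
  shows "infdist p S = min (dist p a) (dist p b) \<and> (\<forall>s \<in> S - {a, b}. infdist p S < dist p s)"
proof -
  obtain \<alpha> \<delta> where a: "a = \<gamma> (cis \<alpha>)" and b: "b = \<gamma> (cis (\<alpha> + \<delta>))"
    and \<delta>: "0 < \<delta>" "\<delta> \<le> 2*pi" and p: "p \<in> curve_arc \<gamma> \<alpha> 0 \<delta>"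
    using assms(11) unfolding open_arc_def curve_arc_def by fastforce
  have S: "finite S" "S \<subseteq> C" "a \<in> S" "b \<in> S" "open_arc \<gamma> a b \<inter> S = {}"
    using assms(6,10) by (auto simp: eps_sample_def next_sample_def)
  have "compact C"
    unfolding assms(5) using assms(2,3) by (intro compact_UN compact_continuous_image) auto
  obtain E where E: "closed E" "C \<subseteq> curve_arc \<gamma> \<alpha> 0 \<delta> \<union> E" "curve_arc \<gamma> \<alpha> 0 \<delta> \<inter> E \<subseteq> {a, b}"
    using curve_family_cut_at_arc_ends[of \<Gamma> \<gamma> \<delta> \<alpha>] assms(2-5,9) \<delta> a b by auto
  have "p \<in> C" using p assms(5,9) curve_arc_Un[of \<delta> \<gamma> \<alpha>] \<delta> by fastforce
  have "infdist p S < \<epsilon> * lfs C p" using assms(6) \<open>p \<in> C\<close> by (auto simp: eps_sample_def)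
  also have "\<dots> \<le> lfs C p"
    using assms(7,8) infdist_nonneg[of p "medial_axis C"] by (simp add: lfs_def mult_left_le_one_le)
  finally have "infdist p S < lfs C p" .
  moreover have "min (dist p a) (dist p b) < dist p s"
    if "s \<in> S - {a, b}" "dist p s < lfs C p" for s
  proof -
    have "s \<notin> curve_arc \<gamma> \<alpha> 0 \<delta>"
      using curve_arc_minus_ends_subset_open_arc[OF \<delta>, of \<gamma> \<alpha>] a b S(5) that(1) by blast
    then have "s \<in> E" using that(1) S(2) E(2) by blast
    moreover have "closed (curve_arc \<gamma> \<alpha> 0 \<delta>)"
      using assms(3,9) by (intro compact_imp_closed compact_curve_arc) blast
    ultimately show ?thesis
      using cut_point_nearer_than_separated_point[OF \<open>compact C\<close> \<open>p \<in> C\<close> _ that(2) _ E(1-3) p]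
        that(1) S(2) by blast
  qed
  ultimately show ?thesis by (rule infdist_eq_min_if_others_far[OF S(1,3,4)])
qed


end
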